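(* Let $G$ be an undirected chordal graph with terminals $s,t$, and let $G'$ be the graph obtained from $G$ by deleting every vertex and every edge that lies on no $s$-$t$ path. Let $T^*$ be the set of vertices $x$ of $G'$ for which there exists an edge $(a,b)\in E(G')$ with $x\in N_{G'}(a)\cap N_{G'}(b)$ such that $G'-x$ contains an $s$-$t$ path using the edge $(a,b)$. Then $T^*$ is a minimum-cardinality tracking set for $G$.
   Context: Graphs are simple. A chordal graph is a graph in which every cycle of length greater than three has a chord. An $s$-$t$ path is a simple path from $s$ to $t$. A set $T\subseteq V(G)$ is a tracking set if for any two distinct $s$-$t$ paths $P_1,P_2$, the sequence of vertices of $T\cap V(P_1)$ in the order encountered along $P_1$ differs from the sequence of vertices of $T\cap V(P_2)$ in the order encountered along $P_2$. $N_{H}(v)$ denotes the neighbourhood of $v$ in $H$; $H-x$ denotes the graph with vertex $x$ deleted. *)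

theory Defs
  imports Main
begin

definition simple_graph :: "'a set \<Rightarrow> ('a \<Rightarrow> 'a \<Rightarrow> bool) \<Rightarrow> bool" where
  "simple_graph V E \<longleftrightarrow> finite V \<and> (\<forall>x y. E x y \<longrightarrow> x \<in> V \<and> y \<in> V)
     \<and> (\<forall>x y. E x y \<longrightarrow> E y x) \<and> (\<forall>x. \<not> E x x)"

definition chordal :: "'a set \<Rightarrow> ('a \<Rightarrow> 'a \<Rightarrow> bool) \<Rightarrow> bool" where
  "chordal V E \<longleftrightarrow> (\<forall>c. length c \<ge> 4 \<and> distinct c \<and> set c \<subseteq> V
        \<and> (\<forall>i. Suc i < length c \<longrightarrow> E (c ! i) (c ! Suc i)) \<and> E (last c) (hd c)
      \<longrightarrow> (\<exists>i j. i < length c \<and> j < length c \<and> E (c ! i) (c ! j)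
              \<and> j \<noteq> Suc i mod length c \<and> i \<noteq> Suc j mod length c))"

definition st_path :: "'a set \<Rightarrow> ('a \<Rightarrow> 'a \<Rightarrow> bool) \<Rightarrow> 'a \<Rightarrow> 'a \<Rightarrow> 'a list \<Rightarrow> bool" where
  "st_path V E s t P \<longleftrightarrow> P \<noteq> [] \<and> hd P = s \<and> last P = t \<and> distinct P \<and> set P \<subseteq> V
     \<and> (\<forall>i. Suc i < length P \<longrightarrow> E (P ! i) (P ! Suc i))"

definition tracking_set :: "'a set \<Rightarrow> ('a \<Rightarrow> 'a \<Rightarrow> bool) \<Rightarrow> 'a \<Rightarrow> 'a \<Rightarrow> 'a set \<Rightarrow> bool" where
  "tracking_set V E s t T \<longleftrightarrow> T \<subseteq> V \<and>
     (\<forall>P1 P2. st_path V E s t P1 \<and> st_path V E s t P2 \<and> P1 \<noteq> P2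
        \<longrightarrow> filter (\<lambda>v. v \<in> T) P1 \<noteq> filter (\<lambda>v. v \<in> T) P2)"

definition uses_edge :: "'a list \<Rightarrow> 'a \<Rightarrow> 'a \<Rightarrow> bool" where
  "uses_edge P a b \<longleftrightarrow> (\<exists>i. Suc i < length P \<and>
     ((P ! i = a \<and> P ! Suc i = b) \<or> (P ! i = b \<and> P ! Suc i = a)))"

definition pruned_V :: "'a set \<Rightarrow> ('a \<Rightarrow> 'a \<Rightarrow> bool) \<Rightarrow> 'a \<Rightarrow> 'a \<Rightarrow> 'a set" where
  "pruned_V V E s t = {x. \<exists>P. st_path V E s t P \<and> x \<in> set P}"

definition pruned_E :: "'a set \<Rightarrow> ('a \<Rightarrow> 'a \<Rightarrow> bool) \<Rightarrow> 'a \<Rightarrow> 'a \<Rightarrow> 'a \<Rightarrow> 'a \<Rightarrow> bool" where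
  "pruned_E V E s t a b \<longleftrightarrow> (\<exists>P. st_path V E s t P \<and> uses_edge P a b)"

definition Tstar :: "'a set \<Rightarrow> ('a \<Rightarrow> 'a \<Rightarrow> bool) \<Rightarrow> 'a \<Rightarrow> 'a \<Rightarrow> 'a set" where
  "Tstar V E s t = {x \<in> pruned_V V E s t. \<exists>a b. pruned_E V E s t a b
      \<and> pruned_E V E s t a x \<and> pruned_E V E s t b x
      \<and> (\<exists>P. st_path (pruned_V V E s t - {x})
                (\<lambda>u v. pruned_E V E s t u v \<and> u \<noteq> x \<and> v \<noteq> x) s t P
             \<and> uses_edge P a b)}"

end

theory Submission
  imports Defs "HOL-Library.Sublist"
begin

text \<open>A vertex x of T* lies in every tracking set: an s-t path of G' - x through an edge ab
  with a, b adjacent to x can be rerouted as a, x, b, which changes the path but not its trace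
  on a set avoiding x. Conversely, suppose two s-t paths with the same T*-trace part after a
  common vertex u, continuing with b and c. A vertex skipped by a chord P_{i-1} P_{i+1} of an
  s-t path lies in T*, so up to the first vertex of T* \<union> {t} (the same vertex on both paths,
  by the equal traces) both paths are free of such shortcuts. Closing them up at their first
  common vertex gives a cycle through u, and in a chordal graph every cycle has a chord
  skipping a vertex other than two prescribed consecutive ones; this forces the edge bc. But
  an edge bc at the point of divergence puts b or c into T* in a way the equal traces exclude.\<close>

definition is_path :: "'a set \<Rightarrow> ('a \<Rightarrow> 'a \<Rightarrow> bool) \<Rightarrow> 'a list \<Rightarrow> bool" where
  "is_path V E P \<longleftrightarrow> distinct P \<and> set P \<subseteq> V \<and> (\<forall>i. Suc i < length P \<longrightarrow> E (P ! i) (P ! Suc i))"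

lemma st_path_iff_is_path:
  "st_path V E s t P \<longleftrightarrow> is_path V E P \<and> P \<noteq> [] \<and> hd P = s \<and> last P = t"
  unfolding st_path_def is_path_def by auto

lemma is_path_Nil [simp]: "is_path V E []"
  unfolding is_path_def by simp

lemma is_path_append:
  "is_path V E (xs @ ys) \<longleftrightarrow> is_path V E xs \<and> is_path V E ys \<and> set xs \<inter> set ys = {}
     \<and> (xs \<noteq> [] \<longrightarrow> ys \<noteq> [] \<longrightarrow> E (last xs) (hd ys))"
proof -
  have edges: "(\<forall>i. Suc i < length (xs @ ys) \<longrightarrow> E ((xs @ ys) ! i) ((xs @ ys) ! Suc i)) \<longleftrightarrow>
      (\<forall>i. Suc i < length xs \<longrightarrow> E (xs ! i) (xs ! Suc i))
    \<and> (\<forall>i. Suc i < length ys \<longrightarrow> E (ys ! i) (ys ! Suc i))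
    \<and> (xs \<noteq> [] \<longrightarrow> ys \<noteq> [] \<longrightarrow> E (last xs) (hd ys))" (is "?L \<longleftrightarrow> ?R")
  proof
    assume L: ?L
    have "E (xs ! i) (xs ! Suc i)" if "Suc i < length xs" for i
      using L[rule_format, of i] that by (simp add: nth_append)
    moreover have "E (ys ! i) (ys ! Suc i)" if "Suc i < length ys" for i
      using L[rule_format, of "length xs + i"] that by (simp add: nth_append)
    moreover have "E (last xs) (hd ys)" if "xs \<noteq> []" "ys \<noteq> []"
      using L[rule_format, of "length xs - 1"] that
      by (simp add: nth_append last_conv_nth hd_conv_nth)
    ultimately show ?R by blast
  next
    assume R: ?R
    show ?L
    proof (intro allI impI)
      fix i assume i: "Suc i < length (xs @ ys)"
      consider "Suc i < length xs" | "Suc i = length xs" | "length xs \<le> i" by linarith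
      then show "E ((xs @ ys) ! i) ((xs @ ys) ! Suc i)"
      proof cases
        case 3
        then have "(xs @ ys) ! i = ys ! (i - length xs)"
          "(xs @ ys) ! Suc i = ys ! Suc (i - length xs)"
          by (simp_all add: nth_append Suc_diff_le)
        then show ?thesis using R i 3 by auto
      next
        case 2
        then have "i = length xs - 1" by simp
        then show ?thesis using R i 2 by (auto simp: nth_append last_conv_nth hd_conv_nth)
      qed (use R in \<open>auto simp: nth_append\<close>)
    qed
  qed
  show ?thesis
    unfolding is_path_def edges by auto
qed

lemma is_path_Cons:
  "is_path V E (x # xs) \<longleftrightarrow> x \<in> V \<and> x \<notin> set xs \<and> is_path V E xs \<and> (xs \<noteq> [] \<longrightarrow> E x (hd xs))"
  using is_path_append[of V E "[x]" xs] by (auto simp: is_path_def)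

lemma is_path_rev:
  assumes "\<And>a b. E a b \<Longrightarrow> E b a"
  shows "is_path V E (rev P) \<longleftrightarrow> is_path V E P"
  by (induction P) (auto simp: is_path_append is_path_Cons last_rev intro: assms)

lemma st_path_splice:
  assumes "st_path V E s t (xs @ ys)" "st_path V E s' t (zs @ ws)" "xs \<noteq> []" "ws \<noteq> []"
    "set xs \<inter> set ws = {}" "E (last xs) (hd ws)"
  shows "st_path V E s t (xs @ ws)"
  using assms by (auto simp: st_path_iff_is_path is_path_append)

lemma simple_graph_sym: "simple_graph V E \<Longrightarrow> E a b \<Longrightarrow> E b a"
  unfolding simple_graph_def by blast

lemma simple_graph_irrefl: "simple_graph V E \<Longrightarrow> \<not> E a a"
  unfolding simple_graph_def by blast

section \<open>Shortcuts and chordal cycles\<close>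

definition shortcut_free :: "('a \<Rightarrow> 'a \<Rightarrow> bool) \<Rightarrow> 'a list \<Rightarrow> bool" where
  "shortcut_free E P \<longleftrightarrow> (\<forall>i. Suc (Suc i) < length P \<longrightarrow> \<not> E (P ! i) (P ! Suc (Suc i)))"

lemma shortcut_free_infix: "shortcut_free E (xs @ P @ ys) \<Longrightarrow> shortcut_free E P"
  unfolding shortcut_free_def
proof (intro allI impI)
  fix i assume "\<forall>i. Suc (Suc i) < length (xs @ P @ ys) \<longrightarrow>
      \<not> E ((xs @ P @ ys) ! i) ((xs @ P @ ys) ! Suc (Suc i))" and "Suc (Suc i) < length P"
  then show "\<not> E (P ! i) (P ! Suc (Suc i))"
    by (auto simp: nth_append dest: spec[of _ "length xs + i"])
qed

lemma shortcut_free_rev: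
  assumes sym: "\<And>a b. E a b \<Longrightarrow> E b a" and sf: "shortcut_free E P"
  shows "shortcut_free E (rev P)"
  unfolding shortcut_free_def
proof (intro allI impI notI)
  fix i assume i: "Suc (Suc i) < length (rev P)" and e: "E (rev P ! i) (rev P ! Suc (Suc i))"
  define j where "j = length P - Suc (Suc (Suc i))"
  have "rev P ! i = P ! Suc (Suc j)" "rev P ! Suc (Suc i) = P ! j" "Suc (Suc j) < length P"
    using i by (simp_all add: rev_nth j_def Suc_diff_Suc)
  then show False using sf sym[OF e] unfolding shortcut_free_def by auto
qed

lemma chordal_cycle_chord:
  assumes sg: "simple_graph V E" and ch: "chordal V E"
    and C: "is_path V E C" "4 \<le> length C" "E (last C) (hd C)"
  obtains i j where "Suc i < j" "j < length C" "E (C ! i) (C ! j)" "\<not> (i = 0 \<and> Suc j = length C)"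
proof -
  have chord: "Suc i < j \<and> \<not> (i = 0 \<and> Suc j = length C)"
    if "i < j" "j < length C" "j \<noteq> Suc i mod length C" "i \<noteq> Suc j mod length C" for i j
    using that by (cases "Suc j = length C") auto
  obtain i j where ij: "i < length C" "j < length C" "E (C ! i) (C ! j)"
      "j \<noteq> Suc i mod length C" "i \<noteq> Suc j mod length C"
  proof -
    have "4 \<le> length C \<and> distinct C \<and> set C \<subseteq> V
        \<and> (\<forall>i. Suc i < length C \<longrightarrow> E (C ! i) (C ! Suc i)) \<and> E (last C) (hd C)"
      using C unfolding is_path_def by auto
    then show thesis using that spec[OF ch[unfolded chordal_def], of C] by blast
  qed
  have "i \<noteq> j" using ij(3) simple_graph_irrefl[OF sg] by metis
  then consider "i < j" | "j < i" by linarith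
  then show thesis
  proof cases
    case 1
    then show thesis using that chord ij by blast
  next
    case 2
    then show thesis using that[of j i] chord[of j i] ij simple_graph_sym[OF sg] by blast
  qed
qed

text \<open>The shortcut skips C ! Suc i, which is neither hd C nor last C.\<close>

lemma chordal_cycle_has_shortcut:
  assumes sg: "simple_graph V E" and ch: "chordal V E"
    and "is_path V E C" "3 \<le> length C" "E (last C) (hd C)"
  shows "\<not> shortcut_free E C"
  using assms(3-)
proof (induction "length C" arbitrary: C rule: less_induct)
  case less
  show ?case
  proof (cases "length C = 3")
    case True
    then have "C \<noteq> []" by auto
    then have "E (C ! 0) (C ! 2)"
      using True less.prems(3) simple_graph_sym[OF sg] by (auto simp: last_conv_nth hd_conv_nth)
    then show ?thesis using True unfolding shortcut_free_def by (auto simp: numeral_2_eq_2)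
  next
    case False
    then have "4 \<le> length C" using less.prems(2) by simp
    then obtain i j where ij: "Suc i < j" "j < length C" "E (C ! i) (C ! j)"
        "\<not> (i = 0 \<and> Suc j = length C)"
      by (rule chordal_cycle_chord[OF sg ch less.prems(1) _ less.prems(3)])
    define C' where "C' = drop i (take (Suc j) C)"
    have "take i C @ C' = take (Suc j) C"
      using append_take_drop_id[of i "take (Suc j) C"] ij unfolding C'_def
      by (simp add: min_absorb1)
    then have split: "C = take i C @ C' @ drop (Suc j) C"
      by (metis append_assoc append_take_drop_id)
    have "\<not> shortcut_free E C'"
    proof (rule less.hyps)
      show "length C' < length C" "3 \<le> length C'" using ij unfolding C'_def by auto
      show "is_path V E C'" using less.prems(1) split by (metis is_path_append)
      show "E (last C') (hd C')"
        using ij simple_graph_sym[OF sg] unfolding C'_def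
        by (simp add: last_conv_nth hd_conv_nth min_absorb1)
    qed
    then show ?thesis using split shortcut_free_infix by metis
  qed
qed

lemma lens_closes_cycle:
  assumes sym: "\<And>a b. E a b \<Longrightarrow> E b a"
    and p: "is_path V E p" and q: "is_path V E q"
    and ends: "hd p = hd q" "last p = last q"
    and len: "2 \<le> length p" "2 \<le> length q"
    and meet: "set p \<inter> set q \<subseteq> {hd p, last p}"
  shows "is_path V E (rev (butlast p) @ tl q)"
    and "E (last (rev (butlast p) @ tl q)) (hd (rev (butlast p) @ tl q))"
proof -
  have "p \<noteq> []" "q \<noteq> []" "tl q \<noteq> []" using len by (auto simp: tl_Nil)
  have q_Cons: "q = hd q # tl q" using len by (cases q) auto
  have butlast_p: "butlast p = hd p # butlast (tl p)" using len by (cases p) auto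
  have p_path: "is_path V E (butlast p)" and closing: "E (last (butlast p)) (last p)"
  proof -
    have "is_path V E (butlast p @ [last p])" using p \<open>p \<noteq> []\<close> by simp
    then show "is_path V E (butlast p)" "E (last (butlast p)) (last p)"
      using butlast_p unfolding is_path_append by auto
  qed
  have q_path: "is_path V E (tl q)" and q_start: "E (hd q) (hd (tl q))"
    using q is_path_Cons[of V E "hd q" "tl q"] q_Cons \<open>tl q \<noteq> []\<close> by auto
  have "distinct (butlast p @ [last p])" "distinct (hd q # tl q)"
    using p q \<open>p \<noteq> []\<close> q_Cons unfolding is_path_def by auto
  then have "set (butlast p) \<inter> set (tl q) = {}"
    using meet ends butlast_p in_set_butlastD[of _ p] list.set_sel(2)[OF \<open>q \<noteq> []\<close>] by auto
  then show "is_path V E (rev (butlast p) @ tl q)"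
    unfolding is_path_append using p_path q_path q_start ends arg_cong[OF butlast_p, of hd]
    by (simp add: is_path_rev[OF sym] last_rev)
  have "last (rev (butlast p) @ tl q) = last p" "hd (rev (butlast p) @ tl q) = last (butlast p)"
    using ends \<open>tl q \<noteq> []\<close> butlast_p by (simp_all add: hd_rev last_tl)
  then show "E (last (rev (butlast p) @ tl q)) (hd (rev (butlast p) @ tl q))"
    using closing sym by simp
qed

text \<open>The shortcut of the cycle obtained from chordality cannot skip the junction last p = last q,
  and shortcut-freeness of p and q leaves only the chord skipping hd p = hd q.\<close>

lemma chordal_lens:
  assumes sg: "simple_graph V E" and ch: "chordal V E"
    and p: "is_path V E p" and q: "is_path V E q"
    and ends: "hd p = hd q" "last p = last q"
    and len: "3 \<le> length p" "2 \<le> length q"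
    and meet: "set p \<inter> set q \<subseteq> {hd p, last p}"
    and sf: "shortcut_free E p" "shortcut_free E q"
  shows "E (p ! 1) (q ! 1)"
proof -
  have sym: "\<And>a b. E a b \<Longrightarrow> E b a" using simple_graph_sym[OF sg] .
  define C where "C = rev (butlast p) @ tl q"
  have C_alt: "C = rev (butlast (tl p)) @ q"
    using len ends unfolding C_def by (cases p; cases q) auto
  have "is_path V E C" "E (last C) (hd C)" "3 \<le> length C"
    using lens_closes_cycle[OF sym p q ends _ len(2) meet] len unfolding C_def by auto
  then obtain i where i: "Suc (Suc i) < length C" "E (C ! i) (C ! Suc (Suc i))"
    using chordal_cycle_has_shortcut[OF sg ch] unfolding shortcut_free_def by blast
  consider "Suc (Suc i) < length p - 1" | "Suc (Suc i) = length p - 1"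
    | "length p - 1 < Suc (Suc i)" by linarith
  then show ?thesis
  proof cases
    case 1
    have "p \<noteq> []" using len by auto
    then have "shortcut_free E (butlast p)"
      using sf(1) shortcut_free_infix[of E "[]" "butlast p" "[last p]"] by simp
    then have "shortcut_free E (rev (butlast p))" using shortcut_free_rev sym by metis
    then show ?thesis using i 1 unfolding C_def shortcut_free_def by (auto simp: nth_append)
  next
    case 2
    then have "C ! i = p ! 1" "C ! Suc (Suc i) = q ! 1"
      using len unfolding C_def by (auto simp: nth_append rev_nth nth_butlast nth_tl)
    then show ?thesis using i by simp
  next
    case 3
    define k where "k = i - length (rev (butlast (tl p)))"
    have "length (rev (butlast (tl p))) \<le> i" using 3 by auto
    then have "C ! i = q ! k" "C ! Suc (Suc i) = q ! Suc (Suc k)" "Suc (Suc k) < length q"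
      using i unfolding C_alt k_def by (auto simp: nth_append Suc_diff_le)
    then show ?thesis using i sf(2) unfolding shortcut_free_def by auto
  qed
qed

lemma chordal_lens_diverging:
  assumes sg: "simple_graph V E" and ch: "chordal V E"
    and p: "is_path V E p" and q: "is_path V E q"
    and ends: "hd p = hd q" "last p = last q"
    and len: "2 \<le> length p" "2 \<le> length q" and diverge: "p ! 1 \<noteq> q ! 1"
    and meet: "set p \<inter> set q \<subseteq> {hd p, last p}"
    and sf: "shortcut_free E p" "shortcut_free E q"
  shows "E (p ! 1) (q ! 1)"
proof (cases "length p = 2")
  case True
  have "length q \<noteq> 2"
  proof
    assume "length q = 2"
    moreover have "p \<noteq> []" "q \<noteq> []" using len by auto
    ultimately have "q ! 1 = last q" "p ! 1 = last p" using True by (simp_all add: last_conv_nth)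
    then show False using diverge ends by simp
  qed
  then have "E (q ! 1) (p ! 1)"
    using chordal_lens[OF sg ch q p ends[symmetric]] len meet ends sf by auto
  then show ?thesis using simple_graph_sym[OF sg] by blast
next
  case False
  then show ?thesis using chordal_lens[OF sg ch p q ends] len meet sf by simp
qed

section \<open>The vertices of T*\<close>

lemma uses_edge_iff_split:
  "uses_edge P a b \<longleftrightarrow> (\<exists>xs ys. P = xs @ a # b # ys \<or> P = xs @ b # a # ys)"
proof
  assume "uses_edge P a b"
  then obtain i where i: "Suc i < length P"
    "(P ! i = a \<and> P ! Suc i = b) \<or> (P ! i = b \<and> P ! Suc i = a)"
    unfolding uses_edge_def by blast
  have "P = take i P @ P ! i # P ! Suc i # drop (Suc (Suc i)) P"
    using i(1) by (simp add: Cons_nth_drop_Suc id_take_nth_drop)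
  then show "\<exists>xs ys. P = xs @ a # b # ys \<or> P = xs @ b # a # ys" using i(2) by metis
next
  assume "\<exists>xs ys. P = xs @ a # b # ys \<or> P = xs @ b # a # ys"
  then show "uses_edge P a b"
    unfolding uses_edge_def by (force simp: nth_append intro: exI[of _ "length xs" for xs])
qed

lemma pruned_E_imp_E:
  assumes "simple_graph V E" "pruned_E V E s t a b"
  shows "E a b"
proof -
  obtain P i where "st_path V E s t P" "Suc i < length P"
    "(P ! i = a \<and> P ! Suc i = b) \<or> (P ! i = b \<and> P ! Suc i = a)"
    using assms(2) unfolding pruned_E_def uses_edge_def by blast
  then show ?thesis using simple_graph_sym[OF assms(1)] unfolding st_path_def by blast
qed

lemma pruned_E_imp_pruned_V: "pruned_E V E s t a b \<Longrightarrow> b \<in> pruned_V V E s t"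
  unfolding pruned_E_def pruned_V_def uses_edge_iff_split by auto

lemma st_path_mono:
  assumes "st_path V' E' s t P" "V' \<subseteq> V" "\<And>u v. E' u v \<Longrightarrow> E u v"
  shows "st_path V E s t P"
  using assms unfolding st_path_def by blast

lemma st_path_pruned_avoiding:
  assumes "st_path V E s t P" "x \<notin> set P"
  shows "st_path (pruned_V V E s t - {x}) (\<lambda>u v. pruned_E V E s t u v \<and> u \<noteq> x \<and> v \<noteq> x) s t P"
  unfolding st_path_def
proof (intro conjI allI impI)
  show "set P \<subseteq> pruned_V V E s t - {x}"
    using assms unfolding pruned_V_def by blast
  fix i assume "Suc i < length P"
  then show "pruned_E V E s t (P ! i) (P ! Suc i)" "P ! i \<noteq> x" "P ! Suc i \<noteq> x"
    using assms unfolding pruned_E_def uses_edge_def by (auto dest: nth_mem Suc_lessD)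
qed (use assms in \<open>auto simp: st_path_def\<close>)

lemma Tstar_intro:
  assumes "st_path V E s t P" "x \<notin> set P" "uses_edge P a b"
    "pruned_E V E s t a x" "pruned_E V E s t b x"
  shows "x \<in> Tstar V E s t"
  using assms st_path_pruned_avoiding[OF assms(1,2)] pruned_E_imp_pruned_V[OF assms(4)]
  unfolding Tstar_def pruned_E_def by blast

lemma Tstar_if_shortcut:
  assumes P: "st_path V E s t (xs @ a # y # b # ys)" and ab: "E a b"
  shows "y \<in> Tstar V E s t"
proof (rule Tstar_intro)
  show "st_path V E s t (xs @ a # b # ys)"
    using P ab by (auto simp: st_path_iff_is_path is_path_append is_path_Cons hd_append)
  show "y \<notin> set (xs @ a # b # ys)"
    using P by (auto simp: st_path_def)
  show "uses_edge (xs @ a # b # ys) a b"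
    unfolding uses_edge_iff_split by blast
  have "xs @ a # y # b # ys = (xs @ [a]) @ y # b # ys" by simp
  then show "pruned_E V E s t a y" "pruned_E V E s t b y"
    using P unfolding pruned_E_def uses_edge_iff_split by metis+
qed

lemma shortcut_free_if_inner_not_Tstar:
  assumes P: "st_path V E s t (xs @ p @ ys)" and inner: "set (butlast (tl p)) \<inter> Tstar V E s t = {}"
  shows "shortcut_free E p"
  unfolding shortcut_free_def
proof (intro allI impI notI)
  fix i assume i: "Suc (Suc i) < length p" and e: "E (p ! i) (p ! Suc (Suc i))"
  have "p = take i p @ p ! i # p ! Suc i # p ! Suc (Suc i) # drop (Suc (Suc (Suc i))) p"
    using i by (simp add: Cons_nth_drop_Suc id_take_nth_drop)
  then have "st_path V E s t ((xs @ take i p) @ p ! i # p ! Suc i # p ! Suc (Suc i)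
      # (drop (Suc (Suc (Suc i))) p @ ys))"
    using P by (metis append.assoc append_Cons)
  then have "p ! Suc i \<in> Tstar V E s t" using e by (rule Tstar_if_shortcut)
  moreover have "p ! Suc i \<in> set (butlast (tl p))"
    using i nth_mem[of i "butlast (tl p)"] by (simp add: nth_butlast nth_tl)
  ultimately show False using inner by blast
qed

lemma Tstar_subset_tracking_set:
  assumes sg: "simple_graph V E" and T: "tracking_set V E s t T"
  shows "Tstar V E s t \<subseteq> T"
proof
  fix x assume x: "x \<in> Tstar V E s t"
  then obtain a b P where ax: "pruned_E V E s t a x" and bx: "pruned_E V E s t b x"
    and P': "st_path (pruned_V V E s t - {x}) (\<lambda>u v. pruned_E V E s t u v \<and> u \<noteq> x \<and> v \<noteq> x) s t P"
    and ab: "uses_edge P a b"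
    unfolding Tstar_def by blast
  have P: "st_path V E s t P"
    by (rule st_path_mono[OF P']) (auto simp: pruned_V_def st_path_def dest: pruned_E_imp_E[OF sg])
  have "x \<notin> set P" and "x \<in> V"
    using P' x by (auto simp: st_path_def Tstar_def pruned_V_def)
  obtain xs ys a' b' where split: "P = xs @ a' # b' # ys"
    and "pruned_E V E s t a' x" "pruned_E V E s t b' x"
    using ab ax bx unfolding uses_edge_iff_split by blast
  then have "E a' x" "E x b'"
    using pruned_E_imp_E[OF sg] simple_graph_sym[OF sg] by blast+
  define Q where "Q = xs @ a' # x # b' # ys"
  have Q: "st_path V E s t Q"
    using P \<open>x \<notin> set P\<close> \<open>x \<in> V\<close> \<open>E a' x\<close> \<open>E x b'\<close> unfolding Q_def split
    by (auto simp: st_path_iff_is_path is_path_append is_path_Cons hd_append)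
  show "x \<in> T"
  proof (rule ccontr)
    assume "x \<notin> T"
    then have "filter (\<lambda>v. v \<in> T) Q = filter (\<lambda>v. v \<in> T) P" unfolding Q_def split by simp
    moreover have "Q \<noteq> P" using \<open>x \<notin> set P\<close> unfolding Q_def by auto
    ultimately show False using T P Q unfolding tracking_set_def by blast
  qed
qed

section \<open>Equal traces force an edge at the divergence\<close>

lemma st_path_prefix_eq:
  assumes P: "st_path V E s t P" and Q: "st_path V E s t Q" and "prefix P Q"
  shows "P = Q"
proof -
  obtain r where Q_eq: "Q = P @ r" using \<open>prefix P Q\<close> by (auto simp: prefix_def)
  show ?thesis
  proof (rule ccontr)
    assume "P \<noteq> Q"
    then have "r \<noteq> []" using Q_eq by simp
    then have "t \<in> set r" using Q Q_eq unfolding st_path_def by (metis last_appendR last_in_set)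
    moreover have "t \<in> set P" using P unfolding st_path_def by auto
    ultimately show False using Q Q_eq unfolding st_path_def by auto
  qed
qed

lemma st_paths_diverge:
  assumes P: "st_path V E s t P" and Q: "st_path V E s t Q" and "P \<noteq> Q"
  obtains xs u b bs c cs where "P = xs @ u # b # bs" "Q = xs @ u # c # cs" "b \<noteq> c"
proof -
  have "P \<parallel> Q" using st_path_prefix_eq[OF P Q] st_path_prefix_eq[OF Q P] \<open>P \<noteq> Q\<close> by blast
  then obtain as b bs c cs where split: "b \<noteq> c" "P = as @ b # bs" "Q = as @ c # cs"
    using parallel_decomp by blast
  moreover have "as \<noteq> []" using split P Q unfolding st_path_def by auto
  then obtain xs u where "as = xs @ [u]" by (cases as rule: rev_cases) auto
  ultimately show thesis using that by simp
qed

text \<open>If D has no T-vertex the split is at last D, which is t when D ends an s-t path.\<close>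

lemma split_at_first_marked:
  assumes "D \<noteq> []"
  obtains D0 D2 where "D = D0 @ (case filter (\<lambda>v. v \<in> T) D of [] \<Rightarrow> last D | y # _ \<Rightarrow> y) # D2"
    "set D0 \<inter> T = {}"
proof (cases "filter (\<lambda>v. v \<in> T) D")
  case Nil
  then show ?thesis using that[of "butlast D" "[]"] assms
    by (auto simp: filter_empty_conv dest: in_set_butlastD)
next
  case (Cons y ys)
  then obtain us vs where "D = us @ y # vs" "\<forall>u\<in>set us. u \<notin> T"
    unfolding filter_eq_Cons_iff by blast
  then show ?thesis using that[of us vs] Cons by auto
qed

lemma split_at_first_common:
  assumes "x \<in> set A" "x \<in> set B"
  obtains A1 y A3 B1 B3 where "A = A1 @ y # A3" "B = B1 @ y # B3" "set A1 \<inter> set B = {}"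
proof -
  obtain A1 y A3 where "A = A1 @ y # A3" "y \<in> set B" "\<forall>z\<in>set A1. z \<notin> set B"
    using split_list_first_propE[of A "\<lambda>z. z \<in> set B"] assms by blast
  moreover obtain B1 B3 where "B = B1 @ y # B3" using \<open>y \<in> set B\<close> split_list by metis
  ultimately show thesis using that by blast
qed

lemma Tstar_at_divergence:
  assumes sg: "simple_graph V E"
    and P: "st_path V E s t (xs @ u # b # bs)" and Q: "st_path V E s t (xs @ u # c # cs)"
    and bc: "E b c"
  shows "b \<notin> set cs \<Longrightarrow> b \<in> Tstar V E s t" and "b \<in> set cs \<Longrightarrow> c \<in> Tstar V E s t"
proof -
  have "b \<noteq> c" using bc simple_graph_irrefl[OF sg] by metis
  have ub: "pruned_E V E s t u b" and uc: "pruned_E V E s t u c"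
    using P Q unfolding pruned_E_def uses_edge_iff_split by blast+
  show "b \<in> Tstar V E s t" if "b \<notin> set cs"
  proof (rule Tstar_intro[OF Q])
    have "st_path V E s t ((xs @ [u, b]) @ bs)" "st_path V E s t ((xs @ [u]) @ c # cs)"
      using P Q by simp_all
    then have "st_path V E s t ((xs @ [u, b]) @ c # cs)"
      by (rule st_path_splice) (use P Q bc that \<open>b \<noteq> c\<close> in \<open>auto simp: st_path_def\<close>)
    then show "pruned_E V E s t c b"
      unfolding pruned_E_def uses_edge_iff_split by (metis append.assoc append_Cons append_Nil)
    show "b \<notin> set (xs @ u # c # cs)" using P that \<open>b \<noteq> c\<close> by (auto simp: st_path_def)
    show "uses_edge (xs @ u # c # cs) c u" unfolding uses_edge_iff_split by blast
  qed (rule ub)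
  show "c \<in> Tstar V E s t" if "b \<in> set cs"
  proof -
    obtain cs1 cs2 where cs: "cs = cs1 @ b # cs2" using \<open>b \<in> set cs\<close> split_list by metis
    have Q': "st_path V E s t ((xs @ u # c # cs1) @ b # cs2)" using Q cs by simp
    have W: "st_path V E s t ((xs @ [u]) @ b # cs2)"
      by (rule st_path_splice[OF _ Q'])
        (use P Q' pruned_E_imp_E[OF sg ub] in \<open>auto simp: st_path_def\<close>)
    have "st_path V E s t ((xs @ [u, c]) @ b # cs2)"
      by (rule st_path_splice[OF _ Q'])
        (use Q' bc simple_graph_sym[OF sg] in \<open>auto simp: st_path_def\<close>)
    then have "pruned_E V E s t b c"
      unfolding pruned_E_def uses_edge_iff_split by (metis append.assoc append_Cons append_Nil)
    moreover have "c \<notin> set ((xs @ [u]) @ b # cs2)"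
      using Q' \<open>b \<noteq> c\<close> by (auto simp: st_path_def)
    moreover have "uses_edge ((xs @ [u]) @ b # cs2) u b" unfolding uses_edge_iff_split by auto
    ultimately show ?thesis using Tstar_intro[OF W _ _ uc] by blast
  qed
qed

lemma not_adjacent_at_divergence:
  assumes sg: "simple_graph V E"
    and P: "st_path V E s t (xs @ u # b # bs)" and Q: "st_path V E s t (xs @ u # c # cs)"
    and "b \<noteq> c"
    and same: "filter (\<lambda>v. v \<in> Tstar V E s t) (b # bs) = filter (\<lambda>v. v \<in> Tstar V E s t) (c # cs)"
  shows "\<not> E b c"
proof
  let ?T = "\<lambda>v. v \<in> Tstar V E s t"
  have marked_later: "x \<in> set ys \<and> \<not> ?T y" if "?T x" "x \<noteq> y"
    "filter ?T (x # xs') = filter ?T (y # ys)" for x y xs' ys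
  proof -
    have "filter ?T (y # ys) = x # filter ?T xs'" using that(1,3) by simp
    moreover have "\<not> ?T y"
    proof
      assume "?T y"
      then have "filter ?T (y # ys) = y # filter ?T ys" by simp
      then show False using calculation that(2) by simp
    qed
    ultimately have "x \<in> set (filter ?T ys)" by simp
    then show ?thesis using \<open>\<not> ?T y\<close> by simp
  qed
  assume bc: "E b c"
  have cb: "E c b" using bc simple_graph_sym[OF sg] by blast
  note PQ = Tstar_at_divergence[OF sg P Q bc] and QP = Tstar_at_divergence[OF sg Q P cb]
  have "b \<notin> Tstar V E s t"
  proof
    assume "b \<in> Tstar V E s t"
    then have "b \<in> set cs \<and> c \<notin> Tstar V E s t" using marked_later[OF _ \<open>b \<noteq> c\<close> same] by blast
    then show False using PQ(2) by blast
  qed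
  moreover have "c \<notin> Tstar V E s t"
  proof
    assume "c \<in> Tstar V E s t"
    then have "c \<in> set bs \<and> b \<notin> Tstar V E s t"
      using marked_later[OF _ \<open>b \<noteq> c\<close>[symmetric] same[symmetric]] by blast
    then show False using QP(2) by blast
  qed
  ultimately show False using PQ by blast
qed

lemma adjacent_at_reconvergence:
  assumes sg: "simple_graph V E" and ch: "chordal V E"
    and P: "st_path V E s t (xs @ u # A @ w # A2)" and Q: "st_path V E s t (xs @ u # B @ w # B2)"
    and unmarked: "set A \<inter> Tstar V E s t = {}" "set B \<inter> Tstar V E s t = {}"
    and diverge: "hd (A @ [w]) \<noteq> hd (B @ [w])"
  shows "E (hd (A @ [w])) (hd (B @ [w]))"
proof -
  have "w \<in> set (A @ [w])" "w \<in> set (B @ [w])" by simp_all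
  then obtain A1 x A3 B1 B3 where A': "A @ [w] = A1 @ x # A3" and B': "B @ [w] = B1 @ x # B3"
    and disj: "set A1 \<inter> set (B @ [w]) = {}"
    by (rule split_at_first_common)
  define p where "p = u # A1 @ [x]"
  define q where "q = u # B1 @ [x]"
  have "xs @ u # A @ w # A2 = xs @ p @ A3 @ A2"
    unfolding p_def using arg_cong[OF A', of "\<lambda>l. l @ A2"] by simp
  with P have Pp: "st_path V E s t (xs @ p @ A3 @ A2)" by (simp only:)
  have "xs @ u # B @ w # B2 = xs @ q @ B3 @ B2"
    unfolding q_def using arg_cong[OF B', of "\<lambda>l. l @ B2"] by simp
  with Q have Qq: "st_path V E s t (xs @ q @ B3 @ B2)" by (simp only:)
  have "set A1 \<subseteq> set A" "set B1 \<subseteq> set B"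
    using arg_cong[OF A', of butlast] arg_cong[OF B', of butlast] by (auto simp: butlast_append)
  then have inner: "set (butlast (tl p)) \<inter> Tstar V E s t = {}"
    "set (butlast (tl q)) \<inter> Tstar V E s t = {}"
    using unmarked unfolding p_def q_def by auto
  have seconds: "p ! 1 = hd (A @ [w])" "q ! 1 = hd (B @ [w])"
    unfolding p_def q_def A' B' by (cases A1; cases B1; simp)+
  have "u \<notin> set A1"
    using P \<open>set A1 \<subseteq> set A\<close> unfolding st_path_def by auto
  then have meet: "set p \<inter> set q \<subseteq> {hd p, last p}"
    using disj B' unfolding p_def q_def by auto
  have "E (p ! 1) (q ! 1)"
  proof (rule chordal_lens_diverging[OF sg ch _ _ _ _ _ _ _ meet])
    show "is_path V E p" "is_path V E q"
      using Pp Qq unfolding st_path_iff_is_path is_path_append by blast+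
    show "hd p = hd q" "last p = last q" "2 \<le> length p" "2 \<le> length q"
      unfolding p_def q_def by simp_all
    show "p ! 1 \<noteq> q ! 1" using seconds diverge by simp
    show "shortcut_free E p" "shortcut_free E q"
      using shortcut_free_if_inner_not_Tstar[OF Pp inner(1)]
        shortcut_free_if_inner_not_Tstar[OF Qq inner(2)] .
  qed
  then show ?thesis using seconds by simp
qed

lemma adjacent_at_divergence:
  assumes sg: "simple_graph V E" and ch: "chordal V E"
    and P: "st_path V E s t (xs @ u # b # bs)" and Q: "st_path V E s t (xs @ u # c # cs)"
    and "b \<noteq> c"
    and same: "filter (\<lambda>v. v \<in> Tstar V E s t) (b # bs) = filter (\<lambda>v. v \<in> Tstar V E s t) (c # cs)"
  shows "E b c"
proof -
  let ?T = "Tstar V E s t"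
  define w where "w = (case filter (\<lambda>v. v \<in> ?T) (b # bs) of [] \<Rightarrow> last (b # bs) | y # _ \<Rightarrow> y)"
  have "last (b # bs) = last (c # cs)" using P Q unfolding st_path_def by simp
  then have w_alt: "w = (case filter (\<lambda>v. v \<in> ?T) (c # cs) of [] \<Rightarrow> last (c # cs) | y # _ \<Rightarrow> y)"
    unfolding w_def same by (simp only:)
  obtain A A2 where A: "b # bs = A @ w # A2" "set A \<inter> ?T = {}"
    using split_at_first_marked[of "b # bs" ?T] unfolding w_def by blast
  obtain B B2 where B: "c # cs = B @ w # B2" "set B \<inter> ?T = {}"
    using split_at_first_marked[of "c # cs" ?T] unfolding w_alt by blast
  have "hd (A @ [w]) = b" "hd (B @ [w]) = c"
    using arg_cong[OF A(1), of hd] arg_cong[OF B(1), of hd] by (cases A; cases B; simp)+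
  then show ?thesis
    using adjacent_at_reconvergence[OF sg ch P[unfolded A(1)] Q[unfolded B(1)] A(2) B(2)] \<open>b \<noteq> c\<close>
    by simp
qed

lemma Tstar_subset_V: "Tstar V E s t \<subseteq> V"
  unfolding Tstar_def pruned_V_def st_path_def by blast

lemma Tstar_tracking_set:
  assumes sg: "simple_graph V E" and ch: "chordal V E"
  shows "tracking_set V E s t (Tstar V E s t)"
  unfolding tracking_set_def
proof (intro conjI allI impI Tstar_subset_V)
  fix P Q assume "st_path V E s t P \<and> st_path V E s t Q \<and> P \<noteq> Q"
  then have P: "st_path V E s t P" and Q: "st_path V E s t Q" and "P \<noteq> Q" by blast+
  then obtain xs u b bs c cs where split: "P = xs @ u # b # bs" "Q = xs @ u # c # cs" and "b \<noteq> c"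
    by (rule st_paths_diverge)
  show "filter (\<lambda>v. v \<in> Tstar V E s t) P \<noteq> filter (\<lambda>v. v \<in> Tstar V E s t) Q"
  proof
    assume "filter (\<lambda>v. v \<in> Tstar V E s t) P = filter (\<lambda>v. v \<in> Tstar V E s t) Q"
    then have "filter (\<lambda>v. v \<in> Tstar V E s t) ((xs @ [u]) @ b # bs)
        = filter (\<lambda>v. v \<in> Tstar V E s t) ((xs @ [u]) @ c # cs)"
      unfolding split by simp
    then have same:
      "filter (\<lambda>v. v \<in> Tstar V E s t) (b # bs) = filter (\<lambda>v. v \<in> Tstar V E s t) (c # cs)"
      by (simp only: filter_append same_append_eq)
    show False
      using adjacent_at_divergence[OF sg ch P[unfolded split] Q[unfolded split] \<open>b \<noteq> c\<close> same]
        not_adjacent_at_divergence[OF sg P[unfolded split] Q[unfolded split] \<open>b \<noteq> c\<close> same]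
      by contradiction
  qed
qed

theorem mainTheorem2:
  fixes V :: "'a set" and E :: "'a \<Rightarrow> 'a \<Rightarrow> bool" and s t :: 'a
  assumes "simple_graph V E" and "chordal V E" and "s \<in> V" and "t \<in> V"
  shows "tracking_set V E s t (Tstar V E s t) \<and>
         (\<forall>T. tracking_set V E s t T \<longrightarrow> card (Tstar V E s t) \<le> card T)"
proof (intro conjI allI impI)
  show "tracking_set V E s t (Tstar V E s t)"
    using Tstar_tracking_set[OF assms(1,2)] .
  fix T assume T: "tracking_set V E s t T"
  have "finite T"
    using T assms(1) finite_subset unfolding tracking_set_def simple_graph_def by blast
  then show "card (Tstar V E s t) \<le> card T"
    using Tstar_subset_tracking_set[OF assms(1) T] by (rule card_mono)
qed

end
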